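(* Let $X$ be a finite alphabet with $|X|\geq 2$ and let $\mathsf V$ be a nontrivial pseudovariety of finite semigroups closed under concatenation. Then the minimum ideal of $\overline{\Omega}_X\mathsf V$ contains no element of $\Omega^\mu_X\mathsf V$.
   Context: $\overline{\Omega}_X\mathsf V$ is the free pro-$\mathsf V$ semigroup on $X$. $\widehat{\mathbb N}$ is the profinite completion of $(\mathbb N,+)$ and $x\mapsto x^\alpha$ the usual $\alpha$-power operation. $\mu$ is the implicit signature consisting of multiplication together with all unary operations $x\mapsto x^\alpha$, $\alpha\in\widehat{\mathbb N}\setminus\mathbb N$, and $\Omega^\mu_X\mathsf V$ is the subalgebra of $\overline{\Omega}_X\mathsf V$ generated by $X$ under these operations (its elements are called $\mu$-words). A pseudovariety is closed under concatenation if the corresponding variety of rational languages is closed under concatenation product. *)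

theory Defs
  imports Main "HOL-Library.Nat_Bijection"
begin

text \<open>A finite semigroup is represented (up to isomorphism) by a finite nonempty
carrier A of natural numbers together with a multiplication that is closed and
associative on A.\<close>

type_synonym fsg = "nat set \<times> (nat \<Rightarrow> nat \<Rightarrow> nat)"

definition is_fsg :: "fsg \<Rightarrow> bool" where
  "is_fsg S \<longleftrightarrow> finite (fst S) \<and> fst S \<noteq> {}
     \<and> (\<forall>x\<in>fst S. \<forall>y\<in>fst S. snd S x y \<in> fst S)
     \<and> (\<forall>x\<in>fst S. \<forall>y\<in>fst S. \<forall>z\<in>fst S. snd S (snd S x y) z = snd S x (snd S y z))"

definition is_hom :: "fsg \<Rightarrow> fsg \<Rightarrow> (nat \<Rightarrow> nat) \<Rightarrow> bool" where
  "is_hom S T h \<longleftrightarrow> (\<forall>x\<in>fst S. h x \<in> fst T)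
     \<and> (\<forall>x\<in>fst S. \<forall>y\<in>fst S. h (snd S x y) = snd T (h x) (h y))"

definition prod_fsg :: "fsg \<Rightarrow> fsg \<Rightarrow> fsg" where
  "prod_fsg S T = (prod_encode ` (fst S \<times> fst T),
     (\<lambda>x y. case prod_decode x of (a, b) \<Rightarrow> case prod_decode y of (c, d) \<Rightarrow>
        prod_encode (snd S a c, snd T b d)))"

definition pseudovariety :: "fsg set \<Rightarrow> bool" where
  "pseudovariety V \<longleftrightarrow>
     (\<forall>S\<in>V. is_fsg S)
   \<and> (\<forall>S\<in>V. \<forall>B. B \<subseteq> fst S \<longrightarrow> B \<noteq> {} \<longrightarrow> (\<forall>x\<in>B. \<forall>y\<in>B. snd S x y \<in> B)
        \<longrightarrow> (B, snd S) \<in> V)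
   \<and> (\<forall>S\<in>V. \<forall>T h. is_fsg T \<longrightarrow> is_hom S T h \<longrightarrow> h ` fst S = fst T \<longrightarrow> T \<in> V)
   \<and> (\<forall>S\<in>V. \<forall>T\<in>V. prod_fsg S T \<in> V)"

definition nontrivial_pv :: "fsg set \<Rightarrow> bool" where
  "nontrivial_pv V \<longleftrightarrow> (\<exists>S\<in>V. card (fst S) \<ge> 2)"

fun weval :: "(nat \<Rightarrow> nat \<Rightarrow> nat) \<Rightarrow> (nat \<Rightarrow> nat) \<Rightarrow> nat list \<Rightarrow> nat" where
  "weval m f [] = undefined"
| "weval m f [a] = f a"
| "weval m f (a # b # w) = m (f a) (weval m f (b # w))"

text \<open>The languages of A^+ in the variety of rational languages corresponding to V
(Eilenberg): those recognised by a semigroup of V.\<close>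

definition V_lang :: "fsg set \<Rightarrow> nat set \<Rightarrow> nat list set \<Rightarrow> bool" where
  "V_lang V A L \<longleftrightarrow> (\<exists>S\<in>V. \<exists>f. (\<forall>a\<in>A. f a \<in> fst S) \<and> (\<exists>P. P \<subseteq> fst S \<and>
      L = {w. w \<noteq> [] \<and> set w \<subseteq> A \<and> weval (snd S) f w \<in> P}))"

definition closed_under_concat :: "fsg set \<Rightarrow> bool" where
  "closed_under_concat V \<longleftrightarrow> (\<forall>A. finite A \<longrightarrow> A \<noteq> {} \<longrightarrow>
     (\<forall>L K. V_lang V A L \<longrightarrow> V_lang V A K \<longrightarrow> V_lang V A {u @ v |u v. u \<in> L \<and> v \<in> K}))"

section \<open>Free pro-V semigroup as X-ary implicit operations on V\<close>

definition valid_idx :: "fsg set \<Rightarrow> fsg \<times> ('x \<Rightarrow> nat) \<Rightarrow> bool" where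
  "valid_idx V i \<longleftrightarrow> fst i \<in> V \<and> range (snd i) \<subseteq> fst (fst i)"

definition free_pro :: "fsg set \<Rightarrow> (fsg \<times> ('x \<Rightarrow> nat) \<Rightarrow> nat) set" where
  "free_pro V = {w. (\<forall>i. valid_idx V i \<longrightarrow> w i \<in> fst (fst i))
     \<and> (\<forall>i. \<not> valid_idx V i \<longrightarrow> w i = undefined)
     \<and> (\<forall>S T \<phi> h. S \<in> V \<longrightarrow> T \<in> V \<longrightarrow> range \<phi> \<subseteq> fst S \<longrightarrow> is_hom S T h
          \<longrightarrow> h (w (S, \<phi>)) = w (T, h \<circ> \<phi>))}"

definition pmult :: "fsg set \<Rightarrow> (fsg \<times> ('x \<Rightarrow> nat) \<Rightarrow> nat) \<Rightarrow> (fsg \<times> ('x \<Rightarrow> nat) \<Rightarrow> nat)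
     \<Rightarrow> (fsg \<times> ('x \<Rightarrow> nat) \<Rightarrow> nat)" where
  "pmult V u v = (\<lambda>i. if valid_idx V i then snd (fst i) (u i) (v i) else undefined)"

definition pgen :: "fsg set \<Rightarrow> 'x \<Rightarrow> (fsg \<times> ('x \<Rightarrow> nat) \<Rightarrow> nat)" where
  "pgen V x = (\<lambda>i. if valid_idx V i then snd i x else undefined)"

text \<open>Elements of the profinite completion of (N,+) outside N correspond to profinite
integers, given as compatible families of residues.\<close>

definition zhat :: "(nat \<Rightarrow> nat) set" where
  "zhat = {a. (\<forall>n>0. a n < n) \<and> (\<forall>n m. 0 < n \<longrightarrow> 0 < m \<longrightarrow> n dvd m \<longrightarrow> a m mod n = a n)}"

definition spow :: "(nat \<Rightarrow> nat \<Rightarrow> nat) \<Rightarrow> nat \<Rightarrow> nat \<Rightarrow> nat" where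
  "spow m s n = ((\<lambda>y. m y s) ^^ (n - 1)) s"

text \<open>s^alpha in a finite semigroup S: s^k with k beyond the index of s and
k congruent to alpha modulo the period of s.\<close>

definition apow :: "fsg \<Rightarrow> (nat \<Rightarrow> nat) \<Rightarrow> nat \<Rightarrow> nat" where
  "apow S a s = spow (snd S) s (fact (card (fst S)) + a (fact (card (fst S))))"

definition ppow :: "fsg set \<Rightarrow> (nat \<Rightarrow> nat) \<Rightarrow> (fsg \<times> ('x \<Rightarrow> nat) \<Rightarrow> nat)
     \<Rightarrow> (fsg \<times> ('x \<Rightarrow> nat) \<Rightarrow> nat)" where
  "ppow V a u = (\<lambda>i. if valid_idx V i then apow (fst i) a (u i) else undefined)"

inductive_set mu_words :: "fsg set \<Rightarrow> (fsg \<times> ('x \<Rightarrow> nat) \<Rightarrow> nat) set" for V where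
  gen: "pgen V x \<in> mu_words V"
| mult: "u \<in> mu_words V \<Longrightarrow> v \<in> mu_words V \<Longrightarrow> pmult V u v \<in> mu_words V"
| pow: "a \<in> zhat \<Longrightarrow> u \<in> mu_words V \<Longrightarrow> ppow V a u \<in> mu_words V"

definition is_ideal :: "fsg set \<Rightarrow> (fsg \<times> ('x \<Rightarrow> nat) \<Rightarrow> nat) set \<Rightarrow> bool" where
  "is_ideal V J \<longleftrightarrow> J \<subseteq> free_pro V \<and> J \<noteq> {}
     \<and> (\<forall>u\<in>free_pro V. \<forall>j\<in>J. pmult V u j \<in> J \<and> pmult V j u \<in> J)"

definition min_ideal :: "fsg set \<Rightarrow> (fsg \<times> ('x \<Rightarrow> nat) \<Rightarrow> nat) set" where
  "min_ideal V = \<Inter> {J. is_ideal V J}"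

end

theory Submission
  imports Defs "HOL-Library.Sublist"
begin

text \<open>Fix two letters \<open>x \<noteq> y\<close> and call \<open>i\<close> a gap of a word if \<open>y x\<^sup>i y\<close> is a factor of it.
  Concatenating two words creates at most one new gap, the one across the seam, and so does
  raising a word to a power, since all seams of \<open>u\<^sup>k\<close> look alike. Hence a \<open>\<mu>\<close>-word can be
  evaluated in every semigroup of \<open>V\<close> by words with a number of gaps bounded by some \<open>N\<close> that
  depends only on the \<open>\<mu>\<close>-word.

  Conversely, let \<open>z = y x y x\<^sup>2 y \<dots> x\<^sup>N\<^sup>+\<^sup>1 y\<close>, which has the \<open>N + 1\<close> gaps \<open>1, \<dots>, N + 1\<close>.
  Closure under concatenation makes \<open>X\<^sup>+ z X\<^sup>+\<close> a \<open>V\<close>-language, recognised by some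
  \<open>\<phi> : X \<rightarrow> T \<in> V\<close> and \<open>P \<subseteq> T\<close>. The pseudowords whose value at \<open>(T, \<phi>)\<close> lies in \<open>P\<close> form
  an ideal, which contains the minimum ideal; so every word representing the value of an element
  of the minimum ideal contains the factor \<open>z\<close>, and has more than \<open>N\<close> gaps.\<close>

section \<open>Gaps of words\<close>

definition gaps :: "'a \<Rightarrow> 'a \<Rightarrow> 'a list \<Rightarrow> nat set" where
  "gaps x y w = {i. sublist (y # replicate i x @ [y]) w}"

definition leading :: "'a \<Rightarrow> 'a list \<Rightarrow> nat" where
  "leading x w = length (takeWhile ((=) x) w)"

definition trailing :: "'a \<Rightarrow> 'a list \<Rightarrow> nat" where
  "trailing x w = leading x (rev w)"

lemma gaps_length: "i \<in> gaps x y w \<Longrightarrow> i + 2 \<le> length w"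
  unfolding gaps_def by (drule CollectD, drule sublist_length_le) simp

lemma finite_gaps: "finite (gaps x y w)"
  by (rule finite_subset[of _ "{..length w}"]) (auto dest: gaps_length)

lemma gaps_singleton: "gaps x y [a] = {}"
  by (auto dest: gaps_length)

lemma gaps_not_in_set: "y \<notin> set w \<Longrightarrow> gaps x y w = {}"
  unfolding gaps_def by (auto dest!: set_mono_sublist)

lemma gaps_mono:
  assumes "sublist v w"
  shows "gaps x y v \<subseteq> gaps x y w"
  using sublist_order.order.trans[OF _ assms] by (auto simp: gaps_def)

lemma leading_replicate_Cons: "x \<noteq> y \<Longrightarrow> leading x (replicate m x @ y # w) = m"
  by (induction m) (auto simp: leading_def)

lemma leading_append: "y \<in> set u \<Longrightarrow> x \<noteq> y \<Longrightarrow> leading x (u @ v) = leading x u"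
  unfolding leading_def using takeWhile_append1[of y u "(=) x" v] by simp

lemma split_gap_word:
  assumes "y # replicate i x @ [y] = u @ v" "u \<noteq> []" "v \<noteq> []"
  obtains m where "m \<le> i" "u = y # replicate m x" "v = replicate (i - m) x @ [y]"
proof -
  have "u = take (length u) (y # replicate i x @ [y])"
    "v = drop (length u) (y # replicate i x @ [y])"
    by (simp_all add: assms(1))
  moreover have "length u \<le> Suc i" "length u \<noteq> 0"
    using arg_cong[OF assms(1), of length] assms(2,3) by (auto simp flip: length_greater_0_conv)
  ultimately show ?thesis
    by (intro that[of "length u - 1"]) (auto simp: take_Cons' drop_Cons')
qed

lemma gaps_append:
  assumes "x \<noteq> y"
  shows "gaps x y (u @ v) \<subseteq> gaps x y u \<union> gaps x y v \<union> {trailing x u + leading x v}"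
proof
  fix i assume "i \<in> gaps x y (u @ v)"
  then consider "i \<in> gaps x y u" | "i \<in> gaps x y v"
    | u' v' where "y # replicate i x @ [y] = u' @ v'" "suffix u' u" "prefix v' v"
    by (auto simp: gaps_def sublist_append)
  then show "i \<in> gaps x y u \<union> gaps x y v \<union> {trailing x u + leading x v}"
  proof cases
    case 3
    show ?thesis
    proof (cases "u' = [] \<or> v' = []")
      case True
      then show ?thesis
        using 3 by (auto simp: gaps_def dest: prefix_imp_sublist suffix_imp_sublist)
    next
      case False
      with 3 obtain m where "m \<le> i" "u' = y # replicate m x" "v' = replicate (i - m) x @ [y]"
        by (auto elim: split_gap_word)
      with 3 obtain p q where "u = p @ y # replicate m x" "v = replicate (i - m) x @ y # q"
        by (auto simp: suffix_def prefix_def)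
      then have "trailing x u = m" "leading x v = i - m"
        using assms by (simp_all add: trailing_def leading_replicate_Cons)
      then show ?thesis
        using \<open>m \<le> i\<close> by simp
    qed
  qed simp_all
qed

lemma gaps_power:
  assumes "x \<noteq> y" "k \<noteq> 0"
  shows "gaps x y (concat (replicate k w)) \<subseteq> gaps x y w \<union> {trailing x w + leading x w}"
  using assms(2)
proof (induction k)
  case (Suc k)
  show ?case
  proof (cases "k = 0 \<or> y \<notin> set w")
    case True
    then show ?thesis
      by (auto simp: gaps_not_in_set)
  next
    case False
    then obtain k' where "k = Suc k'"
      using not0_implies_Suc by blast
    then have "leading x (concat (replicate k w)) = leading x w"
      using False assms(1) by (auto intro: leading_append)
    then show ?thesis
      using gaps_append[OF assms(1), of w "concat (replicate k w)"] Suc False by auto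
  qed
qed simp

lemma card_gaps_append:
  "x \<noteq> y \<Longrightarrow> card (gaps x y (u @ v)) \<le> card (gaps x y u) + card (gaps x y v) + 1"
proof -
  assume "x \<noteq> y"
  then have "card (gaps x y (u @ v)) \<le> card (insert (trailing x u + leading x v) (gaps x y u \<union> gaps x y v))"
    by (intro card_mono) (auto simp: finite_gaps dest: gaps_append)
  also have "\<dots> \<le> card (gaps x y u \<union> gaps x y v) + 1"
    by (simp add: card_insert_if finite_gaps)
  finally show ?thesis
    using card_Un_le[of "gaps x y u" "gaps x y v"] by linarith
qed

lemma card_gaps_power:
  "x \<noteq> y \<Longrightarrow> k \<noteq> 0 \<Longrightarrow> card (gaps x y (concat (replicate k w))) \<le> card (gaps x y w) + 1"
proof -
  assume "x \<noteq> y" "k \<noteq> 0"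
  then have "card (gaps x y (concat (replicate k w))) \<le> card (insert (trailing x w + leading x w) (gaps x y w))"
    by (intro card_mono) (auto simp: finite_gaps dest: gaps_power)
  then show ?thesis
    by (simp add: card_insert_if finite_gaps split: if_splits)
qed

fun zigzag :: "'a \<Rightarrow> 'a \<Rightarrow> nat \<Rightarrow> 'a list" where
  "zigzag x y 0 = [y]"
| "zigzag x y (Suc k) = zigzag x y k @ replicate (Suc k) x @ [y]"

lemma zigzag_snoc: "\<exists>p. zigzag x y k = p @ [y]"
  by (cases k) auto

lemma gaps_zigzag: "{1..k} \<subseteq> gaps x y (zigzag x y k)"
proof (induction k)
  case (Suc k)
  obtain p where "zigzag x y k = p @ [y]"
    using zigzag_snoc[of x y k] by blast
  then have "Suc k \<in> gaps x y (zigzag x y (Suc k))"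
    by (auto simp: gaps_def)
  moreover have "gaps x y (zigzag x y k) \<subseteq> gaps x y (zigzag x y (Suc k))"
    by (simp add: gaps_mono)
  ultimately show ?case
    using Suc.IH by (auto simp: atLeastAtMostSuc_conv)
qed simp

fun eval_word :: "('b \<Rightarrow> 'b \<Rightarrow> 'b) \<Rightarrow> ('a \<Rightarrow> 'b) \<Rightarrow> 'a list \<Rightarrow> 'b" where
  "eval_word m f [] = undefined"
| "eval_word m f [a] = f a"
| "eval_word m f (a # b # w) = m (f a) (eval_word m f (b # w))"

lemma weval_eq_eval_word: "weval m f w = eval_word m f w"
  by (induction w rule: induct_list012) simp_all

lemma eval_word_map: "eval_word m f (map g w) = eval_word m (f \<circ> g) w"
  by (induction w rule: induct_list012) simp_all

lemma is_fsg_closed: "is_fsg S \<Longrightarrow> a \<in> fst S \<Longrightarrow> b \<in> fst S \<Longrightarrow> snd S a b \<in> fst S"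
  unfolding is_fsg_def by blast

lemma is_fsg_assoc:
  "is_fsg S \<Longrightarrow> a \<in> fst S \<Longrightarrow> b \<in> fst S \<Longrightarrow> c \<in> fst S
    \<Longrightarrow> snd S (snd S a b) c = snd S a (snd S b c)"
  unfolding is_fsg_def by blast

lemma eval_word_in:
  "is_fsg S \<Longrightarrow> f ` set w \<subseteq> fst S \<Longrightarrow> w \<noteq> [] \<Longrightarrow> eval_word (snd S) f w \<in> fst S"
  by (induction w rule: induct_list012) (auto intro: is_fsg_closed)

lemma eval_word_append:
  assumes "is_fsg S" "f ` set (u @ v) \<subseteq> fst S" "u \<noteq> []" "v \<noteq> []"
  shows "eval_word (snd S) f (u @ v) = snd S (eval_word (snd S) f u) (eval_word (snd S) f v)"
  using assms(2,3)
proof (induction u rule: induct_list012)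
  case (3 a b u)
  have prems: "f ` set (b # u @ v) \<subseteq> fst S" "f a \<in> fst S"
    using "3.prems"(1) by auto
  then have "eval_word (snd S) f ((a # b # u) @ v)
      = snd S (f a) (snd S (eval_word (snd S) f (b # u)) (eval_word (snd S) f v))"
    using "3.IH"(2) prems(1) by auto
  also have "\<dots> = snd S (eval_word (snd S) f (a # b # u)) (eval_word (snd S) f v)"
  proof -
    have "eval_word (snd S) f (b # u) \<in> fst S"
      by (rule eval_word_in[OF assms(1)]) (use prems(1) in auto)
    moreover have "eval_word (snd S) f v \<in> fst S"
      by (rule eval_word_in[OF assms(1) _ assms(4)]) (use prems(1) in auto)
    ultimately show ?thesis
      using prems(2) assms(1) by (simp add: is_fsg_assoc)
  qed
  finally show ?case .
qed (use assms(4) in \<open>auto simp: neq_Nil_conv\<close>)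

lemma spow_eval_word:
  assumes "is_fsg S" "f ` set w \<subseteq> fst S" "w \<noteq> []" "k \<noteq> 0"
  shows "spow (snd S) (eval_word (snd S) f w) k = eval_word (snd S) f (concat (replicate k w))"
proof -
  have "((\<lambda>y. snd S y (eval_word (snd S) f w)) ^^ j) (eval_word (snd S) f w)
      = eval_word (snd S) f (concat (replicate (Suc j) w))" for j
  proof (induction j)
    case (Suc j)
    have "concat (replicate (Suc (Suc j)) w) = concat (replicate (Suc j) w) @ w"
      by (induction j) simp_all
    then show ?case
      using Suc assms(1-3) by (simp add: eval_word_append del: replicate.simps)
  qed simp
  then show ?thesis
    using assms(4) by (cases k) (simp_all add: spow_def)
qed

section \<open>Languages of \<open>V\<close>\<close>

lemma pseudovariety_is_fsg: "pseudovariety V \<Longrightarrow> S \<in> V \<Longrightarrow> is_fsg S"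
  unfolding pseudovariety_def by blast

lemma pseudovariety_subsemigroup:
  "pseudovariety V \<Longrightarrow> S \<in> V \<Longrightarrow> B \<subseteq> fst S \<Longrightarrow> B \<noteq> {}
    \<Longrightarrow> (\<forall>a\<in>B. \<forall>b\<in>B. snd S a b \<in> B) \<Longrightarrow> (B, snd S) \<in> V"
  unfolding pseudovariety_def by blast

lemma pseudovariety_prod: "pseudovariety V \<Longrightarrow> S \<in> V \<Longrightarrow> T \<in> V \<Longrightarrow> prod_fsg S T \<in> V"
  unfolding pseudovariety_def by blast

lemma V_langI:
  assumes "S \<in> V" "\<forall>a\<in>A. f a \<in> fst S" "P \<subseteq> fst S"
    "L = {w. w \<noteq> [] \<and> set w \<subseteq> A \<and> weval (snd S) f w \<in> P}"
  shows "V_lang V A L"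
  using assms unfolding V_lang_def by blast

lemma V_lang_lists:
  assumes "pseudovariety V" "S \<in> V"
  shows "V_lang V A (lists A - {[]})"
proof -
  obtain s where s: "s \<in> fst S"
    using assms pseudovariety_is_fsg unfolding is_fsg_def by blast
  then have "lists A - {[]} = {w. w \<noteq> [] \<and> set w \<subseteq> A \<and> weval (snd S) (\<lambda>_. s) w \<in> fst S}"
    using assms by (auto simp: weval_eq_eval_word intro: eval_word_in pseudovariety_is_fsg)
  then show ?thesis
    using assms(2) s by (intro V_langI) auto
qed

lemma V_lang_Diff:
  assumes "pseudovariety V" "V_lang V A L"
  shows "V_lang V A (lists A - {[]} - L)"
proof -
  obtain S f P where S: "S \<in> V" "\<forall>a\<in>A. f a \<in> fst S" "P \<subseteq> fst S"
    and L: "L = {w. w \<noteq> [] \<and> set w \<subseteq> A \<and> weval (snd S) f w \<in> P}"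
    using assms(2) unfolding V_lang_def by blast
  have "w \<noteq> [] \<Longrightarrow> set w \<subseteq> A \<Longrightarrow> weval (snd S) f w \<in> fst S" for w
    using S(1,2) assms(1) by (auto simp: weval_eq_eval_word intro!: eval_word_in pseudovariety_is_fsg)
  then have "lists A - {[]} - L = {w. w \<noteq> [] \<and> set w \<subseteq> A \<and> weval (snd S) f w \<in> fst S - P}"
    unfolding L by auto
  with S show ?thesis
    by (intro V_langI[OF S(1,2) Diff_subset])
qed

lemma weval_prod_fsg:
  "w \<noteq> [] \<Longrightarrow> weval (snd (prod_fsg S T)) (\<lambda>a. prod_encode (f a, g a)) w
    = prod_encode (weval (snd S) f w, weval (snd T) g w)"
  by (induction w rule: induct_list012) (simp_all add: prod_fsg_def)

lemma V_lang_Int: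
  assumes "pseudovariety V" "V_lang V A L" "V_lang V A K"
  shows "V_lang V A (L \<inter> K)"
proof -
  obtain S f P where S: "S \<in> V" "\<forall>a\<in>A. f a \<in> fst S" "P \<subseteq> fst S"
    and L: "L = {w. w \<noteq> [] \<and> set w \<subseteq> A \<and> weval (snd S) f w \<in> P}"
    using assms(2) unfolding V_lang_def by blast
  obtain T g Q where T: "T \<in> V" "\<forall>a\<in>A. g a \<in> fst T" "Q \<subseteq> fst T"
    and K: "K = {w. w \<noteq> [] \<and> set w \<subseteq> A \<and> weval (snd T) g w \<in> Q}"
    using assms(3) unfolding V_lang_def by blast
  have "\<forall>a\<in>A. prod_encode (f a, g a) \<in> fst (prod_fsg S T)"
    "prod_encode ` (P \<times> Q) \<subseteq> fst (prod_fsg S T)"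
    using S T by (auto simp: prod_fsg_def)
  moreover have "L \<inter> K = {w. w \<noteq> [] \<and> set w \<subseteq> A \<and>
      weval (snd (prod_fsg S T)) (\<lambda>a. prod_encode (f a, g a)) w \<in> prod_encode ` (P \<times> Q)}"
    unfolding L K by (auto simp: weval_prod_fsg inj_image_mem_iff[OF inj_prod_encode])
  ultimately show ?thesis
    by (rule V_langI[OF pseudovariety_prod[OF assms(1) S(1) T(1)]])
qed

lemma V_lang_concat:
  "closed_under_concat V \<Longrightarrow> finite A \<Longrightarrow> A \<noteq> {} \<Longrightarrow> V_lang V A L \<Longrightarrow> V_lang V A K
    \<Longrightarrow> V_lang V A {u @ v |u v. u \<in> L \<and> v \<in> K}"
  unfolding closed_under_concat_def by blast

lemma two_le_card_obtains:
  assumes "2 \<le> card A"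
  obtains a b where "a \<in> A" "b \<in> A" "a \<noteq> b"
proof -
  have "finite A" "\<not> card A \<le> Suc 0"
    using assms by (auto intro: card_ge_0_finite)
  then show ?thesis
    using that card_le_Suc0_iff_eq by blast
qed

lemma nonempty_lists_diff_products:
  "lists A - {[]} - {u @ v |u v. u \<in> lists A - {[]} \<and> v \<in> lists A - {[]}} = {[c] |c. c \<in> A}"
    (is "_ - ?K = _")
proof (intro equalityI subsetI)
  fix w assume w: "w \<in> lists A - {[]} - ?K"
  then obtain c u where "w = c # u" "c \<in> A" "u \<in> lists A"
    by (cases w) auto
  moreover have "u = []"
  proof (rule ccontr)
    assume "u \<noteq> []"
    then have "[c] @ u \<in> ?K"
      using \<open>c \<in> A\<close> \<open>u \<in> lists A\<close> by (intro CollectI exI[of _ "[c]"] exI[of _ u]) simp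
    then show False
      using w \<open>w = c # u\<close> by simp
  qed
  ultimately show "w \<in> {[c] |c. c \<in> A}"
    by simp
next
  fix w assume "w \<in> {[c] |c. c \<in> A}"
  moreover have "[c] \<notin> ?K" for c
  proof
    assume "[c] \<in> ?K"
    then obtain u v where "[c] = u @ v" "u \<noteq> []" "v \<noteq> []"
      by blast
    then show False
      by (cases u) auto
  qed
  ultimately show "w \<in> lists A - {[]} - ?K"
    by auto
qed

text \<open>A letter \<open>a\<close> is a word of length one, i.e. outside \<open>A\<^sup>+A\<^sup>+\<close>, on which a map of \<open>A\<close> into
  a semigroup of \<open>V\<close> separating \<open>a\<close> from the other letters takes the value assigned to \<open>a\<close>.\<close>

lemma V_lang_letter:
  assumes "pseudovariety V" "nontrivial_pv V" "closed_under_concat V" "finite A" "a \<in> A"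
  shows "V_lang V A {[a]}"
proof -
  obtain S where "S \<in> V" "2 \<le> card (fst S)"
    using assms(2) unfolding nontrivial_pv_def by blast
  then obtain s t where S: "S \<in> V" "s \<in> fst S" "t \<in> fst S" "s \<noteq> t"
    by (auto elim: two_le_card_obtains)
  define f where "f c = (if c = a then s else t)" for c
  define L where "L = {w. w \<noteq> [] \<and> set w \<subseteq> A \<and> weval (snd S) f w \<in> {s}}"
  define K where "K = {u @ v |u v. u \<in> lists A - {[]} \<and> v \<in> lists A - {[]}}"
  have "V_lang V A L"
    using S by (intro V_langI[OF S(1) _ _ L_def]) (auto simp: f_def)
  moreover have "V_lang V A K"
    unfolding K_def using assms V_lang_lists[OF assms(1) S(1)] by (intro V_lang_concat) auto
  ultimately have "V_lang V A (L \<inter> (lists A - {[]} - K))"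
    using assms(1) by (intro V_lang_Int V_lang_Diff)
  moreover have "lists A - {[]} - K = {[c] |c. c \<in> A}"
    unfolding K_def by (rule nonempty_lists_diff_products)
  then have "L \<inter> (lists A - {[]} - K) = {[a]}"
    using assms(5) S(4) by (auto simp: L_def f_def split: if_splits)
  ultimately show ?thesis
    by simp
qed

lemma V_lang_word:
  assumes "pseudovariety V" "nontrivial_pv V" "closed_under_concat V" "finite A"
    and "z \<noteq> []" "set z \<subseteq> A"
  shows "V_lang V A {z}"
  using assms(5,6)
proof (induction z rule: induct_list012)
  case (3 a b z)
  have "V_lang V A {[a]}" "V_lang V A {b # z}"
    using 3 assms(1-4) by (auto intro: V_lang_letter)
  then have "V_lang V A {u @ v |u v. u \<in> {[a]} \<and> v \<in> {b # z}}"
    using "3.prems" assms(3,4) by (intro V_lang_concat) auto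
  then show ?case
    by simp
qed (use assms in \<open>auto intro: V_lang_letter\<close>)

lemma map_inj_factor:
  assumes "inj f" "map f E = p @ map f z @ q"
  obtains p' q' where "E = p' @ z @ q'" "p = map f p'" "q = map f q'"
proof -
  obtain p' E' where "E = p' @ E'" "p = map f p'" "map f z @ q = map f E'"
    using map_eq_append_conv[THEN iffD1, OF assms(2)] by blast
  moreover obtain z' q' where "E' = z' @ q'" "map f z = map f z'" "q = map f q'"
    using map_eq_append_conv[THEN iffD1, OF \<open>map f z @ q = map f E'\<close>[symmetric]] by blast
  ultimately show ?thesis
    using that assms(1) by simp
qed

lemma mem_concat_concat_singleton:
  "w \<in> {u @ v |u v. u \<in> {u @ v |u v. u \<in> K \<and> v \<in> {z}} \<and> v \<in> K}
    \<longleftrightarrow> (\<exists>p q. p \<in> K \<and> q \<in> K \<and> w = p @ z @ q)"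
proof
  assume "w \<in> {u @ v |u v. u \<in> {u @ v |u v. u \<in> K \<and> v \<in> {z}} \<and> v \<in> K}"
  then obtain p q where "p \<in> K" "q \<in> K" "w = (p @ z) @ q"
    by blast
  then show "\<exists>p q. p \<in> K \<and> q \<in> K \<and> w = p @ z @ q"
    by auto
next
  assume "\<exists>p q. p \<in> K \<and> q \<in> K \<and> w = p @ z @ q"
  then obtain p q where "p \<in> K" "q \<in> K" "w = (p @ z) @ q"
    by auto
  then show "w \<in> {u @ v |u v. u \<in> {u @ v |u v. u \<in> K \<and> v \<in> {z}} \<and> v \<in> K}"
    by blast
qed

text \<open>\<open>V_lang\<close> speaks about words over sets of naturals, so the alphabet \<open>X\<close> is coded
  injectively into \<open>nat\<close>.\<close>

lemma V_recognises_factor_language: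
  fixes z :: "'x::finite list"
  assumes "pseudovariety V" "nontrivial_pv V" "closed_under_concat V" "z \<noteq> []"
  obtains T \<phi> P where "valid_idx V (T, \<phi>)"
    and "\<And>E. E \<noteq> [] \<Longrightarrow> eval_word (snd T) \<phi> E \<in> P \<longleftrightarrow> (\<exists>p q. p \<noteq> [] \<and> q \<noteq> [] \<and> E = p @ z @ q)"
proof -
  obtain enc :: "'x \<Rightarrow> nat" where "inj enc"
    using finite_imp_inj_to_nat_seg[of "UNIV :: 'x set"] by auto
  define A where "A = range enc"
  define K where "K = lists A - {[]}"
  define L where "L = {u @ v |u v. u \<in> {u @ v |u v. u \<in> K \<and> v \<in> {map enc z}} \<and> v \<in> K}"
  have "finite A" "A \<noteq> {}"
    unfolding A_def by simp_all
  obtain S where "S \<in> V"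
    using assms(2) unfolding nontrivial_pv_def by blast
  have "V_lang V A {map enc z}"
    using assms(1-4) \<open>finite A\<close> by (intro V_lang_word) (auto simp: A_def)
  then have "V_lang V A L"
    unfolding L_def K_def using assms(3) \<open>finite A\<close> \<open>A \<noteq> {}\<close> V_lang_lists[OF assms(1) \<open>S \<in> V\<close>]
    by (intro V_lang_concat) simp_all
  then obtain T f P where T: "T \<in> V" "\<forall>a\<in>A. f a \<in> fst T"
    and L: "L = {w. w \<noteq> [] \<and> set w \<subseteq> A \<and> weval (snd T) f w \<in> P}"
    unfolding V_lang_def by blast
  show ?thesis
  proof
    show "valid_idx V (T, f \<circ> enc)"
      using T unfolding valid_idx_def A_def by auto
  next
    fix E :: "'x list" assume "E \<noteq> []"
    then have "eval_word (snd T) (f \<circ> enc) E \<in> P \<longleftrightarrow> map enc E \<in> L"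
      by (simp add: L A_def weval_eq_eval_word eval_word_map image_subset_iff)
    also have "\<dots> \<longleftrightarrow> (\<exists>p q. p \<in> K \<and> q \<in> K \<and> map enc E = p @ map enc z @ q)"
      unfolding L_def by (rule mem_concat_concat_singleton)
    also have "\<dots> \<longleftrightarrow> (\<exists>p q. p \<noteq> [] \<and> q \<noteq> [] \<and> E = p @ z @ q)"
    proof
      assume "\<exists>p q. p \<in> K \<and> q \<in> K \<and> map enc E = p @ map enc z @ q"
      then obtain p q where "p \<noteq> []" "q \<noteq> []" "map enc E = p @ map enc z @ q"
        unfolding K_def by blast
      moreover obtain p' q' where "E = p' @ z @ q'" "p = map enc p'" "q = map enc q'"
        using map_inj_factor[OF \<open>inj enc\<close> \<open>map enc E = p @ map enc z @ q\<close>] .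
      ultimately show "\<exists>p q. p \<noteq> [] \<and> q \<noteq> [] \<and> E = p @ z @ q"
        by blast
    next
      assume "\<exists>p q. p \<noteq> [] \<and> q \<noteq> [] \<and> E = p @ z @ q"
      then obtain p q where "p \<noteq> []" "q \<noteq> []" "E = p @ z @ q"
        by blast
      then show "\<exists>p q. p \<in> K \<and> q \<in> K \<and> map enc E = p @ map enc z @ q"
        unfolding K_def A_def by (intro exI[of _ "map enc p"] exI[of _ "map enc q"]) auto
    qed
    finally show "eval_word (snd T) (f \<circ> enc) E \<in> P \<longleftrightarrow> (\<exists>p q. p \<noteq> [] \<and> q \<noteq> [] \<and> E = p @ z @ q)" .
  qed
qed

section \<open>The free pro-\<open>V\<close> semigroup\<close>

lemma free_pro_value_in: "v \<in> free_pro V \<Longrightarrow> valid_idx V i \<Longrightarrow> v i \<in> fst (fst i)"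
  unfolding free_pro_def by blast

lemma free_pro_natural:
  "v \<in> free_pro V \<Longrightarrow> S \<in> V \<Longrightarrow> T \<in> V \<Longrightarrow> range \<phi> \<subseteq> fst S \<Longrightarrow> is_hom S T h
    \<Longrightarrow> h (v (S, \<phi>)) = v (T, h \<circ> \<phi>)"
  unfolding free_pro_def by blast

lemma valid_idx_hom: "T \<in> V \<Longrightarrow> range \<phi> \<subseteq> fst S \<Longrightarrow> is_hom S T h \<Longrightarrow> valid_idx V (T, h \<circ> \<phi>)"
  by (auto simp: valid_idx_def is_hom_def)

lemma pgen_in_free_pro: "pgen V x \<in> free_pro V"
proof -
  have "h (pgen V x (S, \<phi>)) = pgen V x (T, h \<circ> \<phi>)"
    if "S \<in> V" "T \<in> V" "range \<phi> \<subseteq> fst S" "is_hom S T h" for S T \<phi> h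
    using that valid_idx_hom[OF that(2-4)] by (simp add: pgen_def valid_idx_def)
  moreover have "pgen V x i \<in> fst (fst i)" if "valid_idx V i" for i
    using that by (auto simp: pgen_def valid_idx_def)
  ultimately show ?thesis
    unfolding free_pro_def mem_Collect_eq by (intro conjI allI impI) (simp_all add: pgen_def)
qed

lemma pmult_in_free_pro:
  assumes "pseudovariety V" "u \<in> free_pro V" "v \<in> free_pro V"
  shows "pmult V u v \<in> free_pro V"
proof -
  have closed: "pmult V u v i \<in> fst (fst i)" if "valid_idx V i" for i
  proof -
    have "is_fsg (fst i)"
      using that assms(1) by (simp add: valid_idx_def pseudovariety_is_fsg)
    then show ?thesis
      using that free_pro_value_in[OF assms(2) that] free_pro_value_in[OF assms(3) that]
      by (simp add: pmult_def is_fsg_closed)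
  qed
  have natural: "h (pmult V u v (S, \<phi>)) = pmult V u v (T, h \<circ> \<phi>)"
    if "S \<in> V" "T \<in> V" "range \<phi> \<subseteq> fst S" "is_hom S T h" for S T \<phi> h
  proof -
    have S: "valid_idx V (S, \<phi>)"
      using that by (simp add: valid_idx_def)
    have "u (S, \<phi>) \<in> fst S" "v (S, \<phi>) \<in> fst S"
      using free_pro_value_in[OF assms(2) S] free_pro_value_in[OF assms(3) S] by simp_all
    then have "h (pmult V u v (S, \<phi>)) = snd T (h (u (S, \<phi>))) (h (v (S, \<phi>)))"
      using S that(4) unfolding is_hom_def by (simp add: pmult_def)
    also have "\<dots> = pmult V u v (T, h \<circ> \<phi>)"
      using valid_idx_hom[OF that(2-4)] free_pro_natural[OF assms(2) that]
        free_pro_natural[OF assms(3) that] by (simp add: pmult_def)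
    finally show ?thesis .
  qed
  have "pmult V u v i = undefined" if "\<not> valid_idx V i" for i
    using that by (simp add: pmult_def)
  with closed natural show ?thesis
    unfolding free_pro_def by blast
qed

lemma word_in_free_pro:
  assumes "pseudovariety V" "E \<noteq> []"
  obtains v where "v \<in> free_pro V"
    and "\<And>T \<phi>. valid_idx V (T, \<phi>) \<Longrightarrow> v (T, \<phi>) = eval_word (snd T) \<phi> E"
proof -
  have "\<exists>v\<in>free_pro V. \<forall>T \<phi>. valid_idx V (T, \<phi>) \<longrightarrow> v (T, \<phi>) = eval_word (snd T) \<phi> E"
    using assms(2)
  proof (induction E rule: induct_list012)
    case (2 a)
    show ?case
      by (intro bexI[OF _ pgen_in_free_pro[of V a]]) (simp add: pgen_def)
  next
    case (3 a b E)
    then obtain v where v: "v \<in> free_pro V"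
      and "\<forall>T \<phi>. valid_idx V (T, \<phi>) \<longrightarrow> v (T, \<phi>) = eval_word (snd T) \<phi> (b # E)"
      by blast
    then show ?case
      by (intro bexI[OF _ pmult_in_free_pro[OF assms(1) pgen_in_free_pro[of V a] v]])
         (simp add: pmult_def pgen_def)
  qed simp
  then show ?thesis
    using that by blast
qed

text \<open>The values of all nonempty words at \<open>(T, \<phi>)\<close> form a subsemigroup of \<open>T\<close>, which lies
  in \<open>V\<close>; naturality along its inclusion into \<open>T\<close> puts the value of \<open>v\<close> there.\<close>

lemma free_pro_value_eval_word:
  assumes "pseudovariety V" "valid_idx V (T, \<phi>)" "v \<in> free_pro V"
  obtains E where "E \<noteq> []" "v (T, \<phi>) = eval_word (snd T) \<phi> E"
proof -
  have T: "T \<in> V" "range \<phi> \<subseteq> fst T"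
    using assms(2) by (auto simp: valid_idx_def)
  have fsg: "is_fsg T"
    using assms(1) T(1) by (rule pseudovariety_is_fsg)
  define W where "W = {eval_word (snd T) \<phi> E | E. E \<noteq> []}"
  have "W \<subseteq> fst T"
    using eval_word_in[OF fsg] T(2) by (fastforce simp: W_def)
  have "range \<phi> \<subseteq> W"
  proof
    fix c assume "c \<in> range \<phi>"
    then obtain a where "c = eval_word (snd T) \<phi> [a]"
      by auto
    then show "c \<in> W"
      unfolding W_def by blast
  qed
  have "\<forall>a\<in>W. \<forall>b\<in>W. snd T a b \<in> W"
  proof (intro ballI)
    fix a b assume "a \<in> W" "b \<in> W"
    then obtain E F where "E \<noteq> []" "F \<noteq> []" "a = eval_word (snd T) \<phi> E" "b = eval_word (snd T) \<phi> F"
      unfolding W_def by blast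
    moreover have "\<phi> ` set (E @ F) \<subseteq> fst T"
      using T(2) by auto
    ultimately have "snd T a b = eval_word (snd T) \<phi> (E @ F)"
      using eval_word_append[OF fsg _ \<open>E \<noteq> []\<close> \<open>F \<noteq> []\<close>] by simp
    then show "snd T a b \<in> W"
      unfolding W_def using \<open>E \<noteq> []\<close> by blast
  qed
  then have W: "(W, snd T) \<in> V"
    using pseudovariety_subsemigroup[OF assms(1) T(1) \<open>W \<subseteq> fst T\<close>] \<open>range \<phi> \<subseteq> W\<close> by blast
  have "is_hom (W, snd T) T id"
    using \<open>W \<subseteq> fst T\<close> unfolding is_hom_def by auto
  moreover have "range \<phi> \<subseteq> fst (W, snd T)"
    using \<open>range \<phi> \<subseteq> W\<close> by simp
  ultimately have "id (v ((W, snd T), \<phi>)) = v (T, id \<circ> \<phi>)"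
    using free_pro_natural[OF assms(3) W T(1)] by blast
  moreover have "v ((W, snd T), \<phi>) \<in> W"
    using free_pro_value_in[OF assms(3), of "((W, snd T), \<phi>)"] W \<open>range \<phi> \<subseteq> W\<close>
    by (simp add: valid_idx_def)
  ultimately show ?thesis
    using that unfolding W_def by auto
qed

lemma pmult_eval_word:
  assumes "pseudovariety V" "valid_idx V (T, \<phi>)" "E \<noteq> []" "F \<noteq> []"
    and "u (T, \<phi>) = eval_word (snd T) \<phi> E" "v (T, \<phi>) = eval_word (snd T) \<phi> F"
  shows "pmult V u v (T, \<phi>) = eval_word (snd T) \<phi> (E @ F)"
proof -
  have "is_fsg T" "\<phi> ` set (E @ F) \<subseteq> fst T"
    using assms(1,2) by (auto simp: valid_idx_def pseudovariety_is_fsg)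
  then show ?thesis
    using assms(2-6) by (simp add: pmult_def eval_word_append)
qed

section \<open>Gaps of \<open>\<mu>\<close>-words\<close>

definition gap_bounded :: "fsg set \<Rightarrow> 'x \<Rightarrow> 'x \<Rightarrow> nat \<Rightarrow> (fsg \<times> ('x \<Rightarrow> nat) \<Rightarrow> nat) \<Rightarrow> bool"
  where "gap_bounded V x y N w \<longleftrightarrow> (\<forall>T \<phi>. valid_idx V (T, \<phi>) \<longrightarrow>
    (\<exists>E. E \<noteq> [] \<and> w (T, \<phi>) = eval_word (snd T) \<phi> E \<and> card (gaps x y E) \<le> N))"

lemma gap_bounded_pgen: "gap_bounded V x y 0 (pgen V z)"
  unfolding gap_bounded_def
proof (intro allI impI)
  fix T and \<phi> :: "'a \<Rightarrow> nat" assume "valid_idx V (T, \<phi>)"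
  then have "pgen V z (T, \<phi>) = eval_word (snd T) \<phi> [z]"
    by (simp add: pgen_def)
  then show "\<exists>E. E \<noteq> [] \<and> pgen V z (T, \<phi>) = eval_word (snd T) \<phi> E \<and> card (gaps x y E) \<le> 0"
    by (intro exI[of _ "[z]"]) (simp add: gaps_singleton)
qed

lemma gap_bounded_pmult:
  fixes x y :: 'a
  assumes "pseudovariety V" "x \<noteq> y" "gap_bounded V x y M u" "gap_bounded V x y N v"
  shows "gap_bounded V x y (M + N + 1) (pmult V u v)"
  unfolding gap_bounded_def
proof (intro allI impI)
  fix T and \<phi> :: "'a \<Rightarrow> nat" assume T: "valid_idx V (T, \<phi>)"
  obtain E where E: "E \<noteq> []" "u (T, \<phi>) = eval_word (snd T) \<phi> E" "card (gaps x y E) \<le> M"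
    using assms(3) T unfolding gap_bounded_def by blast
  obtain F where F: "F \<noteq> []" "v (T, \<phi>) = eval_word (snd T) \<phi> F" "card (gaps x y F) \<le> N"
    using assms(4) T unfolding gap_bounded_def by blast
  have "pmult V u v (T, \<phi>) = eval_word (snd T) \<phi> (E @ F)"
    using E(2) F(2) by (rule pmult_eval_word[OF assms(1) T E(1) F(1)])
  moreover have "card (gaps x y (E @ F)) \<le> M + N + 1"
    using card_gaps_append[OF assms(2), of E F] E(3) F(3) by linarith
  ultimately show "\<exists>G. G \<noteq> [] \<and> pmult V u v (T, \<phi>) = eval_word (snd T) \<phi> G
      \<and> card (gaps x y G) \<le> M + N + 1"
    using E(1) by blast
qed

lemma gap_bounded_ppow:
  fixes x y :: 'a
  assumes "pseudovariety V" "x \<noteq> y" "gap_bounded V x y N u"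
  shows "gap_bounded V x y (N + 1) (ppow V a u)"
  unfolding gap_bounded_def
proof (intro allI impI)
  fix T and \<phi> :: "'a \<Rightarrow> nat" assume T: "valid_idx V (T, \<phi>)"
  obtain E where E: "E \<noteq> []" "u (T, \<phi>) = eval_word (snd T) \<phi> E" "card (gaps x y E) \<le> N"
    using assms(3) T unfolding gap_bounded_def by blast
  have fsg: "is_fsg T" "\<phi> ` set E \<subseteq> fst T"
    using assms(1) T by (auto simp: valid_idx_def pseudovariety_is_fsg)
  define k where "k = fact (card (fst T)) + a (fact (card (fst T)))"
  have "k \<noteq> 0"
    unfolding k_def by (simp add: fact_ge_1)
  have "ppow V a u (T, \<phi>) = spow (snd T) (eval_word (snd T) \<phi> E) k"
    using T E(2) by (simp add: ppow_def apow_def k_def)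
  also have "\<dots> = eval_word (snd T) \<phi> (concat (replicate k E))"
    by (rule spow_eval_word[OF fsg E(1) \<open>k \<noteq> 0\<close>])
  finally have "ppow V a u (T, \<phi>) = eval_word (snd T) \<phi> (concat (replicate k E))" .
  moreover have "card (gaps x y (concat (replicate k E))) \<le> N + 1"
    using card_gaps_power[OF assms(2) \<open>k \<noteq> 0\<close>, of E] E(3) by linarith
  moreover have "concat (replicate k E) \<noteq> []"
    using \<open>k \<noteq> 0\<close> E(1) by simp
  ultimately show "\<exists>G. G \<noteq> [] \<and> ppow V a u (T, \<phi>) = eval_word (snd T) \<phi> G
      \<and> card (gaps x y G) \<le> N + 1"
    by blast
qed

lemma mu_word_gap_bounded:
  assumes "pseudovariety V" "x \<noteq> y" "w \<in> mu_words V"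
  shows "\<exists>N. gap_bounded V x y N w"
  using assms(3)
proof (induction w rule: mu_words.induct)
  case (gen z)
  show ?case
    by (rule exI[of _ 0], rule gap_bounded_pgen)
next
  case (mult u v)
  then show ?case
    using gap_bounded_pmult[OF assms(1,2)] by blast
next
  case (pow a u)
  then show ?case
    using gap_bounded_ppow[OF assms(1,2)] by blast
qed

section \<open>The minimum ideal\<close>

lemma min_ideal_value_in:
  assumes "pseudovariety V" "valid_idx V (T, \<phi>)" "w \<in> min_ideal V"
    and "E\<^sub>0 \<noteq> []" "eval_word (snd T) \<phi> E\<^sub>0 \<in> P"
    and ideal: "\<And>E F. E \<noteq> [] \<Longrightarrow> F \<noteq> [] \<Longrightarrow> eval_word (snd T) \<phi> E \<in> P
      \<Longrightarrow> eval_word (snd T) \<phi> (E @ F) \<in> P \<and> eval_word (snd T) \<phi> (F @ E) \<in> P"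
  shows "w (T, \<phi>) \<in> P"
proof -
  define J where "J = {v \<in> free_pro V. v (T, \<phi>) \<in> P}"
  obtain v where "v \<in> free_pro V"
    and "\<And>T \<phi>. valid_idx V (T, \<phi>) \<Longrightarrow> v (T, \<phi>) = eval_word (snd T) \<phi> E\<^sub>0"
    using word_in_free_pro[OF assms(1,4)] by blast
  then have "v \<in> J"
    using assms(2,5) unfolding J_def by simp
  then have "J \<noteq> {}"
    by blast
  moreover have "pmult V u j \<in> J \<and> pmult V j u \<in> J" if u: "u \<in> free_pro V" and "j \<in> J" for u j
  proof -
    have j: "j \<in> free_pro V" "j (T, \<phi>) \<in> P"
      using \<open>j \<in> J\<close> by (simp_all add: J_def)
    obtain E where E: "E \<noteq> []" "u (T, \<phi>) = eval_word (snd T) \<phi> E"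
      using free_pro_value_eval_word[OF assms(1,2) u] .
    obtain F where F: "F \<noteq> []" "j (T, \<phi>) = eval_word (snd T) \<phi> F"
      using free_pro_value_eval_word[OF assms(1,2) j(1)] .
    have "pmult V u j (T, \<phi>) = eval_word (snd T) \<phi> (E @ F)"
      using E(2) F(2) by (rule pmult_eval_word[OF assms(1,2) E(1) F(1)])
    moreover have "pmult V j u (T, \<phi>) = eval_word (snd T) \<phi> (F @ E)"
      using F(2) E(2) by (rule pmult_eval_word[OF assms(1,2) F(1) E(1)])
    moreover have "pmult V u j \<in> free_pro V" "pmult V j u \<in> free_pro V"
      using pmult_in_free_pro[OF assms(1) u j(1)] pmult_in_free_pro[OF assms(1) j(1) u] .
    ultimately show ?thesis
      using ideal[OF F(1) E(1)] j(2) F(2) unfolding J_def by simp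
  qed
  moreover have "J \<subseteq> free_pro V"
    unfolding J_def by blast
  ultimately have "is_ideal V J"
    unfolding is_ideal_def by blast
  then have "w \<in> J"
    using assms(3) unfolding min_ideal_def by blast
  then show ?thesis
    unfolding J_def by blast
qed

lemma min_ideal_value_has_factor:
  fixes z :: "'x::finite list"
  assumes "pseudovariety V" "nontrivial_pv V" "closed_under_concat V" "z \<noteq> []"
    and "w \<in> min_ideal V"
  obtains T \<phi> where "valid_idx V (T, \<phi>)"
    and "\<And>E. E \<noteq> [] \<Longrightarrow> w (T, \<phi>) = eval_word (snd T) \<phi> E \<Longrightarrow> sublist z E"
proof -
  obtain T \<phi> P where T: "valid_idx V (T, \<phi>)"
    and P: "\<And>E. E \<noteq> [] \<Longrightarrow> eval_word (snd T) \<phi> E \<in> P \<longleftrightarrow> (\<exists>p q. p \<noteq> [] \<and> q \<noteq> [] \<and> E = p @ z @ q)"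
    using V_recognises_factor_language[OF assms(1-4)] by blast
  have "w (T, \<phi>) \<in> P"
  proof (rule min_ideal_value_in[OF assms(1) T assms(5)])
    show "z @ z @ z \<noteq> []" "eval_word (snd T) \<phi> (z @ z @ z) \<in> P"
      using P[of "z @ z @ z"] assms(4) by auto
  next
    fix E F :: "'x list" assume "E \<noteq> []" "F \<noteq> []" "eval_word (snd T) \<phi> E \<in> P"
    then obtain p q where "p \<noteq> []" "q \<noteq> []" "E = p @ z @ q"
      using P by blast
    then have "E @ F = p @ z @ (q @ F)" "F @ E = (F @ p) @ z @ q"
      by simp_all
    then show "eval_word (snd T) \<phi> (E @ F) \<in> P \<and> eval_word (snd T) \<phi> (F @ E) \<in> P"
      using P[of "E @ F"] P[of "F @ E"] \<open>p \<noteq> []\<close> \<open>q \<noteq> []\<close> \<open>F \<noteq> []\<close> by blast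
  qed
  show ?thesis
  proof (rule that[OF T])
    fix E assume "E \<noteq> []" "w (T, \<phi>) = eval_word (snd T) \<phi> E"
    then obtain p q where "E = p @ z @ q"
      using P \<open>w (T, \<phi>) \<in> P\<close> by auto
    then show "sublist z E"
      by simp
  qed
qed

theorem corollary2p4:
  fixes V :: "fsg set"
  assumes "card (UNIV :: ('x::finite) set) \<ge> 2"
    and "pseudovariety V"
    and "nontrivial_pv V"
    and "closed_under_concat V"
  shows "(min_ideal V :: (fsg \<times> ('x \<Rightarrow> nat) \<Rightarrow> nat) set) \<inter> mu_words V = {}"
proof (intro equals0I)
  fix w :: "fsg \<times> ('x \<Rightarrow> nat) \<Rightarrow> nat"
  assume w: "w \<in> min_ideal V \<inter> mu_words V"
  obtain x y :: 'x where "x \<noteq> y"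
    using two_le_card_obtains[OF assms(1)] by blast
  obtain N where N: "gap_bounded V x y N w"
    using mu_word_gap_bounded[OF assms(2) \<open>x \<noteq> y\<close>] w by blast
  define z where "z = zigzag x y (Suc N)"
  have "z \<noteq> []"
    unfolding z_def using zigzag_snoc[of x y "Suc N"] by auto
  obtain T \<phi> where T: "valid_idx V (T, \<phi>)"
    and factor: "\<And>E. E \<noteq> [] \<Longrightarrow> w (T, \<phi>) = eval_word (snd T) \<phi> E \<Longrightarrow> sublist z E"
    using min_ideal_value_has_factor[OF assms(2-4) \<open>z \<noteq> []\<close>] w by blast
  obtain E where E: "E \<noteq> []" "w (T, \<phi>) = eval_word (snd T) \<phi> E"
    and "card (gaps x y E) \<le> N"
    using N T unfolding gap_bounded_def by blast
  have "{1..Suc N} \<subseteq> gaps x y z"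
    unfolding z_def by (rule gaps_zigzag)
  also have "\<dots> \<subseteq> gaps x y E"
    using factor[OF E] by (rule gaps_mono)
  finally have "card {1..Suc N} \<le> card (gaps x y E)"
    by (rule card_mono[OF finite_gaps])
  then show False
    using \<open>card (gaps x y E) \<le> N\<close> by simp
qed

end
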